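(* Let $p$ be a prime, $q=p^m$, $1\le r<p$, and let $d(p,m,r)$ be as defined in the context. For every $f(x)\in\mathbb{F}_q[x]$ with $1\le\deg f\le r$, the number $N_f$ of rational places of the function field $E_f=\mathbb{F}_q(x,y)$, $y^p-y=f(x)$, satisfies $$N_f\le 1+p\,(q-d(p,m,r)).$$ Moreover, there exists a polynomial $h(x)\in\mathbb{F}_q[x]$ of degree at most $r$ such that $N_h=1+p\,(q-d(p,m,r))$.
   Context: Enumerate $\mathbb{F}_q^*=\{\alpha_1,\dots,\alpha_{q-1}\}$ and fix an $\mathbb{F}_p$-linear isomorphism $\mathbb{F}_q\cong\mathbb{F}_p^m$. Let $A\in\mathbb{F}_p^{rm\times(q-1)}$ be the matrix whose $j$-th column is the concatenation of the coordinate vectors of $\alpha_j,\alpha_j^2,\dots,\alpha_j^r$. Let $C\subseteq\mathbb{F}_p^{q-1}$ be the row space of $A$ over $\mathbb{F}_p$, and $d(p,m,r)$ the minimum Hamming distance of $C$ (independent of the choices, up to code equivalence). A rational place is a place of degree one; equivalently $N_f=1+p\cdot|\{\beta\in\mathbb{F}_q:\mathrm{Tr}_{\mathbb{F}_q/\mathbb{F}_p}(f(\beta))=0\}|$. *)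

theory Defs
  imports "HOL-Computational_Algebra.Polynomial"
begin

definition prime_subfield :: "'a::{field,finite} set" where
  "prime_subfield = range (of_nat :: nat \<Rightarrow> 'a)"

definition trace :: "nat \<Rightarrow> nat \<Rightarrow> 'a::{field,finite} \<Rightarrow> 'a" where
  "trace p m x = (\<Sum>i<m. x ^ (p ^ i))"

text \<open>Number of rational places of E_f: y^p - y = f(x), via
  N_f = 1 + p * #{beta in F_q : Tr(f(beta)) = 0}.\<close>
definition N_places :: "nat \<Rightarrow> nat \<Rightarrow> 'a::{field,finite} poly \<Rightarrow> nat" where
  "N_places p m f = 1 + p * card {\<beta>::'a. trace p m (poly f \<beta>) = 0}"

text \<open>An F_p-linear isomorphism F_q \<cong> F_p^m, given as coordinate functions:
  coord x i is the i-th coordinate (i < m) of x, lying in the prime subfield.\<close>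
definition is_coord :: "nat \<Rightarrow> ('a::{field,finite} \<Rightarrow> nat \<Rightarrow> 'a) \<Rightarrow> bool" where
  "is_coord m coord \<longleftrightarrow>
     (\<forall>x i. coord x i \<in> prime_subfield) \<and>
     (\<forall>x i. m \<le> i \<longrightarrow> coord x i = 0) \<and>
     (\<forall>x y i. coord (x + y) i = coord x i + coord y i) \<and>
     (\<forall>c\<in>prime_subfield. \<forall>x i. coord (c * x) i = c * coord x i) \<and>
     inj coord"

text \<open>The code C: row space over F_p of the rm x (q-1) matrix A whose column at
  alpha in F_q^* is the concatenation of the coordinate vectors of alpha, ..., alpha^r.
  Codewords are represented as functions on F_q^* (extended by 0 at 0); the row
  indexed by (k,i) is alpha \<mapsto> coord (alpha^k) i.\<close>
definition code :: "nat \<Rightarrow> nat \<Rightarrow> ('a::{field,finite} \<Rightarrow> nat \<Rightarrow> 'a) \<Rightarrow> ('a \<Rightarrow> 'a) set" where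
  "code m r coord =
     {c. \<exists>lam::nat \<Rightarrow> nat \<Rightarrow> 'a. (\<forall>k i. lam k i \<in> prime_subfield) \<and>
          c = (\<lambda>\<alpha>. if \<alpha> = 0 then 0
                   else (\<Sum>k\<in>{1..r}. \<Sum>i<m. lam k i * coord (\<alpha> ^ k) i))}"

definition hamming :: "('a::{field,finite} \<Rightarrow> 'a) \<Rightarrow> ('a \<Rightarrow> 'a) \<Rightarrow> nat" where
  "hamming c c' = card {\<alpha>. \<alpha> \<noteq> 0 \<and> c \<alpha> \<noteq> c' \<alpha>}"

definition min_dist :: "nat \<Rightarrow> nat \<Rightarrow> ('a::{field,finite} \<Rightarrow> nat \<Rightarrow> 'a) \<Rightarrow> nat" where
  "min_dist m r coord =
     Min {hamming c c' | c c'. c \<in> code m r coord \<and> c' \<in> code m r coord \<and> c \<noteq> c'}"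

end

theory Submission
  imports Defs "HOL-Number_Theory.Residues" "HOL-Library.FuncSet"
begin

(* The code C consists exactly of the words alpha |-> Tr (h alpha) on the nonzero elements,
   where deg h <= r and h 0 = 0, because every F_p-linear functional on F_q is a trace form
   x |-> Tr (a x).  If Tr (f b) = 0, then h x = f (x + b) - f b gives such a codeword; it is
   nonzero since Tr o h is not constant (its trace polynomial has degree deg h * p^(m-1) < q),
   and its zeros are the translates of those of Tr o f, so there are at most q - d of them.
   Conversely C is closed under differences, so a pair of codewords at distance d yields an h
   for which Tr o h has exactly q - d zeros. *)

lemma prime_CHAR_finite_field: "prime CHAR('a::{field,finite})"
  using prime_CHAR_semidom finite_imp_CHAR_pos[OF finite_UNIV] by blast

lemma CHAR_eq_of_card_eq_prime_power:
  assumes "prime p" and "card (UNIV :: 'a::{field,finite} set) = p ^ m"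
  shows "CHAR('a) = p"
proof -
  have "CHAR('a) dvd p ^ m" using CHAR_dvd_CARD[where 'a='a] assms(2) by simp
  hence "CHAR('a) dvd p" using prime_CHAR_finite_field prime_dvd_power by blast
  thus ?thesis using prime_CHAR_finite_field assms(1) primes_dvd_imp_eq by blast
qed

lemma card_finite_field_ge_2: "card (UNIV :: 'a::{field,finite} set) \<ge> 2"
proof -
  have "{0, 1} \<subseteq> (UNIV :: 'a set)" by simp
  hence "card {0, 1 :: 'a} \<le> card (UNIV :: 'a set)" by (intro card_mono) auto
  thus ?thesis by simp
qed

lemma power_card_eq_self:
  fixes x :: "'a::{field,finite}"
  shows "x ^ card (UNIV :: 'a set) = x"
proof (cases "x = 0")
  case True
  then show ?thesis using card_finite_field_ge_2[where 'a='a] by simp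
next
  case False
  let ?U = "UNIV - {0 :: 'a}"
  have "bij_betw ((*) x) ?U ?U"
    using False by (intro bij_betwI[where g = "(*) (inverse x)"]) auto
  hence "(\<Prod>y\<in>?U. x * y) = \<Prod>?U" by (rule prod.reindex_bij_betw)
  moreover have "(\<Prod>y\<in>?U. x * y) = x ^ card ?U * \<Prod>?U" by (simp add: prod.distrib)
  ultimately have "x ^ card ?U = 1" by simp
  moreover have "card (UNIV :: 'a set) = Suc (card ?U)"
    using card_Suc_Diff1[of UNIV "0 :: 'a"] by simp
  ultimately show ?thesis by (simp only: power_Suc mult_1_right)
qed

lemma of_nat_power_CHAR: "(of_nat n :: 'a::{field,finite}) ^ CHAR('a) = of_nat n"
proof (induction n)
  case 0
  then show ?case using prime_gt_0_nat[OF prime_CHAR_finite_field] by simp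
next
  case (Suc n)
  have "(of_nat n + 1 :: 'a) ^ CHAR('a) = of_nat n ^ CHAR('a) + 1"
    using freshmans_dream[OF prime_CHAR_finite_field[where 'a='a] refl] by simp
  with Suc show ?case by (simp add: add.commute)
qed

lemma prime_subfield_power_CHAR_power:
  assumes "(c::'a::{field,finite}) \<in> prime_subfield"
  shows "c ^ (CHAR('a) ^ i) = c"
proof (induction i)
  case (Suc i)
  obtain n where "c = of_nat n" using assms by (auto simp: prime_subfield_def)
  hence "c ^ CHAR('a) = c" by (simp add: of_nat_power_CHAR)
  with Suc show ?case by (simp add: power_mult mult.commute)
qed simp

lemma zero_in_prime_subfield: "0 \<in> prime_subfield"
  and one_in_prime_subfield: "1 \<in> prime_subfield"
  unfolding prime_subfield_def by (metis of_nat_0 rangeI, metis of_nat_1 rangeI)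

lemma card_prime_subfield: "card (prime_subfield :: 'a::{field,finite} set) = CHAR('a)"
proof -
  have "prime_subfield = (of_nat ` {..<CHAR('a)} :: 'a set)"
  proof (intro equalityI subsetI)
    fix c :: 'a assume "c \<in> prime_subfield"
    then obtain n where "c = of_nat n" by (auto simp: prime_subfield_def)
    hence "c = of_nat (n mod CHAR('a))" by (simp add: of_nat_eq_iff_cong_CHAR cong_def)
    thus "c \<in> of_nat ` {..<CHAR('a)}"
      using prime_gt_0_nat[OF prime_CHAR_finite_field[where 'a='a]] by auto
  qed (auto simp: prime_subfield_def)
  moreover have "inj_on (of_nat :: nat \<Rightarrow> 'a) {..<CHAR('a)}"
    by (intro inj_onI) (simp add: of_nat_eq_iff_cong_CHAR cong_def)
  ultimately show ?thesis using card_image card_lessThan by metis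
qed

text \<open>The prime subfield is the fixed field of Frobenius: it consists of \<open>CHAR('a)\<close>
  roots of \<open>X\<^sup>p - X\<close>, which has no others.\<close>
lemma prime_subfield_if_power_CHAR_eq:
  assumes "(y::'a::{field,finite}) ^ CHAR('a) = y"
  shows "y \<in> prime_subfield"
proof -
  let ?p = "CHAR('a)"
  define P :: "'a poly" where "P = Polynomial.monom 1 ?p + [:0, -1:]"
  have p2: "?p \<ge> 2" using prime_ge_2_nat[OF prime_CHAR_finite_field] .
  have deg: "degree P = ?p"
    unfolding P_def using p2 by (subst degree_add_eq_left) (auto simp: degree_monom_eq)
  hence "P \<noteq> 0" using p2 by auto
  have roots: "{x. poly P x = 0} = {x. x ^ ?p = x}" by (auto simp: P_def poly_monom)
  have sub: "prime_subfield \<subseteq> {x::'a. x ^ ?p = x}"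
    using prime_subfield_power_CHAR_power[where i = 1] by auto
  moreover have "card {x::'a. x ^ ?p = x} \<le> card (prime_subfield :: 'a set)"
    using card_poly_roots_bound[OF \<open>P \<noteq> 0\<close>] roots deg by (simp add: card_prime_subfield)
  moreover have "card (prime_subfield :: 'a set) \<le> card {x::'a. x ^ ?p = x}"
    using sub by (intro card_mono) auto
  ultimately have "prime_subfield = {x::'a. x ^ ?p = x}"
    by (intro card_subset_eq) auto
  thus ?thesis using assms by auto
qed

lemma trace_add:
  "trace CHAR('a) m (x + y) = trace CHAR('a) m x + trace CHAR('a) m (y::'a::{field,finite})"
  by (simp add: trace_def freshmans_dream'[OF prime_CHAR_finite_field refl] sum.distrib)

lemma trace_diff:
  "trace CHAR('a) m (x - y) = trace CHAR('a) m x - trace CHAR('a) m (y::'a::{field,finite})"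
  using trace_add[of m "x - y" y] by (simp add: algebra_simps)

lemma trace_sum:
  "trace CHAR('a) m (sum f A) = (\<Sum>k\<in>A. trace CHAR('a) m (f k :: 'a::{field,finite}))"
  unfolding trace_def freshmans_dream_sum'[OF prime_CHAR_finite_field refl] by (rule sum.swap)

lemma trace_mult_prime_subfield:
  assumes "c \<in> prime_subfield"
  shows "trace CHAR('a) m (c * x) = c * trace CHAR('a) m (x::'a::{field,finite})"
  using prime_subfield_power_CHAR_power[OF assms]
  by (simp add: trace_def power_mult_distrib sum_distrib_left)

lemma trace_in_prime_subfield:
  assumes "card (UNIV :: 'a::{field,finite} set) = CHAR('a) ^ m"
  shows "trace CHAR('a) m (x::'a) \<in> prime_subfield"
proof (rule prime_subfield_if_power_CHAR_eq)
  let ?p = "CHAR('a)"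
  have "trace ?p m x ^ ?p = (\<Sum>i<m. x ^ ?p ^ Suc i)"
    unfolding trace_def freshmans_dream_sum[OF prime_CHAR_finite_field refl]
    by (simp add: power_mult[symmetric] mult.commute)
  also have "\<dots> = (\<Sum>i<Suc m. x ^ ?p ^ i) - x"
    by (subst sum.lessThan_Suc_shift) simp
  also have "\<dots> = trace ?p m x"
    using power_card_eq_self[of x] assms by (simp add: trace_def)
  finally show "trace ?p m x ^ ?p = trace ?p m x" .
qed

definition trace_poly :: "nat \<Rightarrow> nat \<Rightarrow> 'a::comm_semiring_1 poly \<Rightarrow> 'a poly" where
  "trace_poly p n g = (\<Sum>i<n. g ^ (p ^ i))"

lemma poly_trace_poly: "poly (trace_poly p m g) x = trace p m (poly g (x::'a::{field,finite}))"
  by (simp add: trace_poly_def trace_def poly_sum)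

lemma degree_trace_poly:
  fixes g :: "'a::idom poly"
  assumes "p \<ge> 2" and "degree g \<ge> 1" and "n \<ge> 1"
  shows "degree (trace_poly p n g) = degree g * p ^ (n - 1)"
  using assms(3)
proof (induction n rule: dec_induct)
  case base
  then show ?case by (simp add: trace_poly_def)
next
  case (step n)
  have g: "g \<noteq> 0" using assms(2) by auto
  have "p ^ (n - 1) < p ^ n"
    using assms(1) step.hyps by (intro power_strict_increasing) auto
  hence "degree (trace_poly p n g) < degree (g ^ p ^ n)"
    using step.IH assms(2) g by (simp add: degree_power_eq)
  hence "degree (trace_poly p (Suc n) g) = degree (g ^ p ^ n)"
    by (simp add: trace_poly_def degree_add_eq_right)
  then show ?case using g step.hyps by (simp add: degree_power_eq mult.commute)
qed

text \<open>A polynomial of degree below \<open>p\<close> composed with the trace is never constant: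
  otherwise its trace polynomial, of degree \<open>degree g * p ^ (m - 1) < q\<close>, would
  take one value at all \<open>q\<close> points.\<close>
lemma trace_poly_eval_not_constant:
  fixes g :: "'a::{field,finite} poly"
  assumes card: "card (UNIV :: 'a set) = CHAR('a) ^ m"
    and "degree g \<ge> 1" and "degree g < CHAR('a)"
  shows "\<exists>x. trace CHAR('a) m (poly g x) \<noteq> t"
proof (rule ccontr)
  let ?p = "CHAR('a)"
  assume "\<not> ?thesis"
  hence const: "trace ?p m (poly g x) = t" for x by blast
  have p2: "?p \<ge> 2" using prime_ge_2_nat[OF prime_CHAR_finite_field] .
  have "m \<ge> 1" using card card_finite_field_ge_2[where 'a='a] by (cases m) auto
  define Q where "Q = trace_poly ?p m g + [:- t:]"
  have deg_T: "degree (trace_poly ?p m g) = degree g * ?p ^ (m - 1)"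
    using degree_trace_poly[OF p2 assms(2) \<open>m \<ge> 1\<close>] .
  have "degree (trace_poly ?p m g) \<ge> 1"
    unfolding deg_T using assms(2) p2 by simp
  hence deg_Q: "degree Q = degree g * ?p ^ (m - 1)"
    unfolding Q_def using deg_T p2 by (subst degree_add_eq_left) auto
  hence "Q \<noteq> 0" using assms(2) p2 by auto
  have "{x. poly Q x = 0} = UNIV" using const by (simp add: Q_def poly_trace_poly)
  hence "?p ^ m \<le> degree Q" using card_poly_roots_bound[OF \<open>Q \<noteq> 0\<close>] card by simp
  moreover have "degree Q < ?p * ?p ^ (m - 1)" unfolding deg_Q using assms(3) p2 by simp
  ultimately show False using \<open>m \<ge> 1\<close> by (simp add: power_eq_if split: if_splits)
qed

lemma trace_not_identically_zero:
  assumes "card (UNIV :: 'a::{field,finite} set) = CHAR('a) ^ m"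
  shows "\<exists>y::'a. trace CHAR('a) m y \<noteq> 0"
  using trace_poly_eval_not_constant[OF assms, of "[:0, 1:]" 0]
    prime_ge_2_nat[OF prime_CHAR_finite_field[where 'a='a]] by auto

lemma inj_trace_form:
  assumes "card (UNIV :: 'a::{field,finite} set) = CHAR('a) ^ m"
  shows "inj (\<lambda>(a::'a) x. trace CHAR('a) m (a * x))"
proof (rule injI)
  fix a b :: 'a
  assume eq: "(\<lambda>x. trace CHAR('a) m (a * x)) = (\<lambda>x. trace CHAR('a) m (b * x))"
  show "a = b"
  proof (rule ccontr)
    assume "a \<noteq> b"
    from trace_not_identically_zero[OF assms] obtain y :: 'a where y: "trace CHAR('a) m y \<noteq> 0" ..
    define z where "z = y / (a - b)"
    have "a * z - b * z = y"
      unfolding left_diff_distrib[symmetric] z_def using \<open>a \<noteq> b\<close> by simp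
    hence "trace CHAR('a) m (a * z) - trace CHAR('a) m (b * z) = trace CHAR('a) m y"
      by (simp flip: trace_diff)
    with eq y show False by (metis diff_self)
  qed
qed

locale field_coordinates =
  fixes m :: nat and coord :: "'a::{field,finite} \<Rightarrow> nat \<Rightarrow> 'a"
  assumes card_field: "card (UNIV :: 'a set) = CHAR('a) ^ m"
    and is_coord: "is_coord m coord"
begin

abbreviation Tr :: "'a \<Rightarrow> 'a" where
  "Tr \<equiv> trace CHAR('a) m"

lemma coord_add: "coord (x + y) i = coord x i + coord y i"
  using is_coord by (simp add: is_coord_def)

lemma coord_mult_prime_subfield: "c \<in> prime_subfield \<Longrightarrow> coord (c * x) i = c * coord x i"
  using is_coord by (simp add: is_coord_def)

lemma coord_in_prime_subfield: "coord x i \<in> prime_subfield"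
  using is_coord by (simp add: is_coord_def)

lemma coord_eq_0_beyond: "m \<le> i \<Longrightarrow> coord x i = 0"
  using is_coord by (simp add: is_coord_def)

lemma inj_coord: "inj coord"
  using is_coord by (simp add: is_coord_def)

lemma coord_0: "coord 0 i = 0"
  using coord_mult_prime_subfield[OF zero_in_prime_subfield, of 0 i] by simp

lemma coord_sum: "coord (sum f A) i = (\<Sum>k\<in>A. coord (f k) i)"
proof (induction A rule: infinite_finite_induct)
  case (insert x A)
  then show ?case by (simp add: coord_add)
qed (simp_all add: coord_0)

definition coordinate_vectors :: "(nat \<Rightarrow> 'a) set" where
  "coordinate_vectors = {v. (\<forall>i. v i \<in> prime_subfield) \<and> (\<forall>i\<ge>m. v i = 0)}"

lemma card_coordinate_vectors: "card coordinate_vectors = CHAR('a) ^ m"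
proof -
  have "bij_betw (\<lambda>v. restrict v {..<m}) coordinate_vectors (PiE {..<m} (\<lambda>_. prime_subfield))"
  proof (rule bij_betw_byWitness[where f' = "\<lambda>w i. if i < m then w i else 0"])
    show "\<forall>v\<in>coordinate_vectors. (\<lambda>i. if i < m then restrict v {..<m} i else 0) = v"
      by (auto simp: coordinate_vectors_def fun_eq_iff)
    show "\<forall>w\<in>PiE {..<m} (\<lambda>_. prime_subfield).
            restrict (\<lambda>i. if i < m then w i else 0) {..<m} = w"
      by (auto simp: fun_eq_iff PiE_def extensional_def)
    show "(\<lambda>v. restrict v {..<m}) ` coordinate_vectors \<subseteq> PiE {..<m} (\<lambda>_. prime_subfield)"
      unfolding image_subset_iff coordinate_vectors_def by (simp add: restrict_PiE_iff)
    show "(\<lambda>w i. if i < m then w i else 0) ` PiE {..<m} (\<lambda>_. prime_subfield)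
            \<subseteq> coordinate_vectors"
      unfolding image_subset_iff coordinate_vectors_def
      by (simp add: PiE_iff zero_in_prime_subfield)
  qed
  hence "card coordinate_vectors = card (PiE {..<m} (\<lambda>_. prime_subfield :: 'a set))"
    by (rule bij_betw_same_card)
  then show ?thesis by (simp add: card_PiE card_prime_subfield)
qed

lemma range_coord: "range coord = coordinate_vectors"
proof (rule card_subset_eq)
  show "finite coordinate_vectors"
    using card_coordinate_vectors prime_gt_0_nat[OF prime_CHAR_finite_field[where 'a='a]]
    by (intro card_ge_0_finite) simp
  show "range coord \<subseteq> coordinate_vectors"
    by (auto simp: coordinate_vectors_def coord_in_prime_subfield coord_eq_0_beyond)
  show "card (range coord) = card coordinate_vectors"
    using inj_coord card_field card_coordinate_vectors by (simp add: card_image)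
qed

definition coord_basis :: "nat \<Rightarrow> 'a" where
  "coord_basis i = inv_into UNIV coord (\<lambda>j. if j = i then 1 else 0)"

lemma coord_coord_basis: "i < m \<Longrightarrow> coord (coord_basis i) = (\<lambda>j. if j = i then 1 else 0)"
  unfolding coord_basis_def
  by (rule f_inv_into_f)
    (auto simp: range_coord coordinate_vectors_def zero_in_prime_subfield one_in_prime_subfield)

lemma coord_expansion: "x = (\<Sum>i<m. coord x i * coord_basis i)"
proof (rule injD[OF inj_coord], rule ext)
  fix j
  have "coord (\<Sum>i<m. coord x i * coord_basis i) j
        = (\<Sum>i<m. coord x i * coord (coord_basis i) j)"
    by (simp add: coord_sum coord_mult_prime_subfield coord_in_prime_subfield)
  also have "\<dots> = coord x j"
    by (cases "j < m")
      (simp_all add: coord_coord_basis coord_eq_0_beyond if_distrib cong: if_cong)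
  finally show "coord x j = coord (\<Sum>i<m. coord x i * coord_basis i) j" by simp
qed

lemma trace_mult_coord_expansion: "Tr (a * x) = (\<Sum>i<m. Tr (a * coord_basis i) * coord x i)"
proof -
  have "Tr (a * x) = Tr (\<Sum>i<m. coord x i * (a * coord_basis i))"
    by (subst coord_expansion[of x]) (simp add: sum_distrib_left mult_ac)
  then show ?thesis
    by (simp add: trace_sum trace_mult_prime_subfield coord_in_prime_subfield mult.commute)
qed

text \<open>Counting: the \<open>q\<close> distinct trace forms \<open>x \<mapsto> Tr (a x)\<close> are all among the at most
  \<open>q\<close> functionals with coordinates in the prime field, so they exhaust them.\<close>
lemma coord_functional_eq_trace_form:
  assumes "\<forall>i. w i \<in> prime_subfield"
  shows "\<exists>a. \<forall>x. (\<Sum>i<m. w i * coord x i) = Tr (a * x)"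
proof -
  define \<Phi> where "\<Phi> w = (\<lambda>x. \<Sum>i<m. w i * coord x i)" for w
  define W where "W = PiE {..<m} (\<lambda>_. prime_subfield :: 'a set)"
  have \<Phi>_restrict: "\<Phi> (restrict w {..<m}) = \<Phi> w" for w
    unfolding \<Phi>_def by (intro ext sum.cong) auto
  have trace_forms: "range (\<lambda>a x. Tr (a * x)) \<subseteq> \<Phi> ` W"
  proof (rule image_subsetI)
    fix a
    have "(\<lambda>x. Tr (a * x)) = \<Phi> (\<lambda>i. Tr (a * coord_basis i))"
      unfolding \<Phi>_def by (intro ext trace_mult_coord_expansion)
    hence "(\<lambda>x. Tr (a * x)) = \<Phi> (restrict (\<lambda>i. Tr (a * coord_basis i)) {..<m})"
      by (simp only: \<Phi>_restrict)
    moreover have "restrict (\<lambda>i. Tr (a * coord_basis i)) {..<m} \<in> W"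
      using card_field by (simp add: W_def trace_in_prime_subfield)
    ultimately show "(\<lambda>x. Tr (a * x)) \<in> \<Phi> ` W" by blast
  qed
  have finite: "finite (\<Phi> ` W)" by (simp add: W_def finite_PiE)
  have "card (\<Phi> ` W) \<le> CHAR('a) ^ m"
    using card_image_le[of W \<Phi>] by (simp add: W_def card_PiE card_prime_subfield finite_PiE)
  also have "CHAR('a) ^ m = card (range (\<lambda>a x. Tr (a * x)))"
    using inj_trace_form[OF card_field] card_field by (simp add: card_image)
  finally have "range (\<lambda>a x. Tr (a * x)) = \<Phi> ` W"
    using trace_forms finite card_mono[OF finite trace_forms] by (intro card_subset_eq) auto
  moreover have "\<Phi> w \<in> \<Phi> ` W"
    using assms \<Phi>_restrict[of w] by (metis W_def image_eqI restrict_PiE_iff)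
  ultimately obtain a where "\<Phi> w = (\<lambda>x. Tr (a * x))" by auto
  then show ?thesis unfolding \<Phi>_def by metis
qed

end

lemma poly_eq_sum_atLeast1:
  fixes h :: "'a::comm_semiring_1 poly"
  assumes "degree h \<le> r" and "poly h 0 = 0"
  shows "poly h x = (\<Sum>k\<in>{1..r}. poly.coeff h k * x ^ k)"
proof -
  have "poly h x = (\<Sum>k\<le>r. poly.coeff h k * x ^ k)"
    unfolding poly_altdef using assms(1)
    by (intro sum.mono_neutral_left) (auto simp: coeff_eq_0)
  also have "{..r} = insert 0 {1..r}" by auto
  finally show ?thesis using assms(2) by (simp add: poly_0_coeff_0)
qed

lemma card_Collect_translate: "card {x::'a::ab_group_add. P x} = card {y. P (b + y)}"
proof -
  have "{x. P x} = (+) b ` {y. P (b + y)}"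
    by (auto intro: image_eqI[where x = "x - b" for x])
  then show ?thesis by (simp add: card_image)
qed

lemma hamming_le_card:
  fixes c c' :: "'a::{field,finite} \<Rightarrow> 'a"
  shows "hamming c c' \<le> card (UNIV :: 'a set)"
  unfolding hamming_def by (rule card_mono) auto

lemma hamming_eq_hamming_diff_0: "hamming c c' = hamming (c - c') (\<lambda>_. 0)"
  by (simp add: hamming_def)

lemma finite_code_distances:
  "finite {hamming c c' | c c'. c \<in> code m r coord \<and> c' \<in> code m r coord \<and> c \<noteq> c'}"
  by (rule finite_subset[of _ "{..card (UNIV :: 'a::{field,finite} set)}"])
    (auto simp: hamming_le_card)

lemma min_dist_le_hamming:
  assumes "c \<in> code m r coord" and "c' \<in> code m r coord" and "c \<noteq> c'"
  shows "min_dist m r coord \<le> hamming c c'"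
  unfolding min_dist_def using assms by (intro Min_le[OF finite_code_distances]) blast

lemma min_dist_attained:
  assumes "c \<in> code m r coord" and "c' \<in> code m r coord" and "c \<noteq> c'"
  obtains e e' where "e \<in> code m r coord" and "e' \<in> code m r coord"
    and "hamming e e' = min_dist m r coord"
proof -
  have "min_dist m r coord
          \<in> {hamming c c' | c c'. c \<in> code m r coord \<and> c' \<in> code m r coord \<and> c \<noteq> c'}"
    unfolding min_dist_def using assms by (intro Min_in[OF finite_code_distances]) blast
  then obtain e e' where "e \<in> code m r coord" "e' \<in> code m r coord"
    and "min_dist m r coord = hamming e e'"
    by blast
  then show ?thesis by (intro that) simp_all
qed

context field_coordinates
begin

lemma trace_0: "Tr 0 = 0"
  using trace_mult_prime_subfield[OF zero_in_prime_subfield, of m 0] by simp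

definition trace_word :: "'a poly \<Rightarrow> 'a \<Rightarrow> 'a" where
  "trace_word h \<alpha> = (if \<alpha> = 0 then 0 else Tr (poly h \<alpha>))"

lemma trace_word_0: "trace_word 0 = (\<lambda>_. 0)"
  by (simp add: trace_word_def fun_eq_iff trace_0)

lemma trace_word_diff: "trace_word h - trace_word h' = trace_word (h - h')"
  by (simp add: fun_eq_iff trace_word_def trace_diff)

lemma trace_word_in_code:
  assumes "degree h \<le> r" and "poly h 0 = 0"
  shows "trace_word h \<in> code m r coord"
proof -
  define lam where "lam k i = Tr (poly.coeff h k * coord_basis i)" for k i
  have "Tr (poly h \<alpha>) = (\<Sum>k\<in>{1..r}. \<Sum>i<m. lam k i * coord (\<alpha> ^ k) i)" for \<alpha>
    unfolding poly_eq_sum_atLeast1[OF assms] trace_sum lam_def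
    by (intro sum.cong refl trace_mult_coord_expansion)
  moreover have "lam k i \<in> prime_subfield" for k i
    using card_field by (simp add: lam_def trace_in_prime_subfield)
  ultimately show ?thesis
    unfolding code_def trace_word_def by (intro CollectI exI[of _ lam]) (simp add: fun_eq_iff)
qed

lemma code_elem_eq_trace_word:
  assumes "c \<in> code m r coord"
  obtains h where "degree h \<le> r" and "poly h 0 = 0" and "c = trace_word h"
proof -
  obtain lam where lam: "\<forall>k i. lam k i \<in> prime_subfield"
    and c: "c = (\<lambda>\<alpha>. if \<alpha> = 0 then 0 else \<Sum>k\<in>{1..r}. \<Sum>i<m. lam k i * coord (\<alpha> ^ k) i)"
    using assms unfolding code_def by blast
  have "\<forall>k. \<exists>a. \<forall>x. (\<Sum>i<m. lam k i * coord x i) = Tr (a * x)"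
    using coord_functional_eq_trace_form lam by blast
  then obtain a where a: "\<And>k x. (\<Sum>i<m. lam k i * coord x i) = Tr (a k * x)"
    by metis
  define h where "h = (\<Sum>k\<in>{1..r}. Polynomial.monom (a k) k)"
  have "degree h \<le> r"
    unfolding h_def by (intro degree_sum_le) (auto intro: order.trans[OF degree_monom_le])
  moreover have "poly h 0 = 0" by (simp add: h_def poly_sum poly_monom)
  moreover have "c = trace_word h"
    by (simp add: c a trace_word_def h_def poly_sum poly_monom trace_sum fun_eq_iff)
  ultimately show ?thesis using that by blast
qed

lemma card_trace_zeros:
  assumes "poly h 0 = 0"
  shows "card {\<beta>. Tr (poly h \<beta>) = 0} = CHAR('a) ^ m - hamming (trace_word h) (\<lambda>_. 0)"
proof -
  have "{\<beta>. Tr (poly h \<beta>) = 0} = UNIV - {\<alpha>. \<alpha> \<noteq> 0 \<and> trace_word h \<alpha> \<noteq> 0}"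
    using assms by (auto simp: trace_word_def trace_0)
  then show ?thesis by (simp add: hamming_def card_Diff_subset card_field)
qed

lemma trace_word_ne_0:
  assumes "Tr (poly h x) \<noteq> 0" and "poly h 0 = 0"
  shows "trace_word h \<noteq> (\<lambda>_. 0)"
proof -
  have "x \<noteq> 0" using assms trace_0 by auto
  then show ?thesis using assms(1) by (auto simp: trace_word_def fun_eq_iff)
qed

lemma min_dist_le_weight:
  assumes "degree h \<le> r" and "poly h 0 = 0" and "trace_word h \<noteq> (\<lambda>_. 0)"
  shows "min_dist m r coord \<le> hamming (trace_word h) (\<lambda>_. 0)"
  using min_dist_le_hamming[OF trace_word_in_code[OF assms(1,2)] trace_word_in_code[of 0]]
    assms(3)
  by (simp add: trace_word_0)

lemma min_dist_eq_weight:
  assumes "1 \<le> r"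
  obtains h where "degree h \<le> r" and "poly h 0 = 0"
    and "hamming (trace_word h) (\<lambda>_. 0) = min_dist m r coord"
proof -
  have "trace_word [:0, 1:] \<in> code m r coord" "trace_word 0 \<in> code m r coord"
    using assms by (simp_all add: trace_word_in_code)
  moreover from trace_not_identically_zero[OF card_field] obtain y :: 'a where "Tr y \<noteq> 0" ..
  hence "trace_word [:0, 1:] \<noteq> trace_word 0"
    unfolding trace_word_0 by (intro trace_word_ne_0[of _ y]) simp_all
  ultimately obtain e e' where e: "e \<in> code m r coord" "e' \<in> code m r coord"
    and d: "hamming e e' = min_dist m r coord"
    by (rule min_dist_attained)
  obtain g g' where g: "degree g \<le> r" "poly g 0 = 0" "e = trace_word g"
    and g': "degree g' \<le> r" "poly g' 0 = 0" "e' = trace_word g'"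
    using code_elem_eq_trace_word e by metis
  have "degree (g - g') \<le> r" using g(1) g'(1) by (rule degree_diff_le)
  moreover have "poly (g - g') 0 = 0" using g(2) g'(2) by simp
  moreover have "hamming (trace_word (g - g')) (\<lambda>_. 0) = min_dist m r coord"
    unfolding trace_word_diff[symmetric] hamming_eq_hamming_diff_0[symmetric]
      g(3)[symmetric] g'(3)[symmetric]
    by (rule d)
  ultimately show ?thesis by (rule that)
qed

lemma card_trace_zeros_le:
  assumes "1 \<le> degree f" and "degree f \<le> r" and "r < CHAR('a)"
  shows "card {\<beta>. Tr (poly f \<beta>) = 0} \<le> CHAR('a) ^ m - min_dist m r coord"
proof (cases "\<exists>b. Tr (poly f b) = 0")
  case True
  then obtain b where b: "Tr (poly f b) = 0" by blast
  define g where "g = f \<circ>\<^sub>p [:b, 1:] + [:- poly f b:]"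
  have poly_g: "poly g x = poly f (b + x) - poly f b" for x
    by (simp add: g_def poly_pcompose)
  have g0: "poly g 0 = 0" by (simp add: poly_g)
  have trace_g: "Tr (poly g x) = Tr (poly f (b + x))" for x
    by (simp add: poly_g trace_diff b)
  have deg_g: "degree g = degree f"
    unfolding g_def using assms(1) by (subst degree_add_eq_left) (simp_all add: degree_pcompose)
  obtain x where "Tr (poly g x) \<noteq> 0"
    using trace_poly_eval_not_constant[OF card_field, of g 0] deg_g assms by auto
  hence nonzero: "trace_word g \<noteq> (\<lambda>_. 0)" using g0 by (rule trace_word_ne_0)
  have "card {\<beta>. Tr (poly f \<beta>) = 0} = card {\<alpha>. Tr (poly g \<alpha>) = 0}"
    unfolding trace_g by (rule card_Collect_translate)
  also have "\<dots> = CHAR('a) ^ m - hamming (trace_word g) (\<lambda>_. 0)"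
    using g0 by (rule card_trace_zeros)
  also have "\<dots> \<le> CHAR('a) ^ m - min_dist m r coord"
    using min_dist_le_weight[OF _ g0 nonzero] deg_g assms(2) by (intro diff_le_mono2) simp
  finally show ?thesis .
qed simp

lemma card_trace_zeros_attained:
  assumes "1 \<le> r"
  obtains h where "degree h \<le> r"
    and "card {\<beta>. Tr (poly h \<beta>) = 0} = CHAR('a) ^ m - min_dist m r coord"
proof -
  obtain h where "degree h \<le> r" "poly h 0 = 0"
    and "hamming (trace_word h) (\<lambda>_. 0) = min_dist m r coord"
    using min_dist_eq_weight[OF assms] by blast
  then show ?thesis using that card_trace_zeros by simp
qed

lemma min_dist_le_card: "1 \<le> r \<Longrightarrow> min_dist m r coord \<le> CHAR('a) ^ m"
  using min_dist_eq_weight hamming_le_card card_field by metis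

end

theorem theorem4p3:
  fixes p m r :: nat
    and coord :: "'a::{field,finite} \<Rightarrow> nat \<Rightarrow> 'a"
  assumes "prime p"
    and "card (UNIV :: 'a set) = p ^ m"
    and "1 \<le> r" and "r < p"
    and "is_coord m coord"
  shows "(\<forall>f :: 'a poly. 1 \<le> degree f \<and> degree f \<le> r \<longrightarrow>
            int (N_places p m f) \<le> 1 + int p * (int (card (UNIV :: 'a set)) - int (min_dist m r coord)))
         \<and> (\<exists>h :: 'a poly. degree h \<le> r \<and>
            int (N_places p m h) = 1 + int p * (int (card (UNIV :: 'a set)) - int (min_dist m r coord)))"
proof -
  have char: "CHAR('a) = p" using CHAR_eq_of_card_eq_prime_power assms(1,2) .
  interpret field_coordinates m coord
    using assms(2,5) char by unfold_locales simp_all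
  let ?d = "min_dist m r coord"
  have d: "?d \<le> p ^ m" using min_dist_le_card[OF assms(3)] char by simp
  have "int (N_places p m f) \<le> 1 + int p * (int (p ^ m) - int ?d)"
    if "1 \<le> degree f" "degree f \<le> r" for f :: "'a poly"
  proof -
    have "card {\<beta>. trace p m (poly f \<beta>) = 0} \<le> p ^ m - ?d"
      using card_trace_zeros_le[OF that] assms(4) char by simp
    hence "int (card {\<beta>. trace p m (poly f \<beta>) = 0}) \<le> int (p ^ m) - int ?d"
      unfolding of_nat_diff[OF d, symmetric] by (simp only: of_nat_le_iff)
    hence "int p * int (card {\<beta>. trace p m (poly f \<beta>) = 0})
           \<le> int p * (int (p ^ m) - int ?d)"
      by (rule mult_left_mono) simp
    then show ?thesis unfolding N_places_def by simp
  qed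
  moreover obtain h where "degree h \<le> r"
    and h: "card {\<beta>. Tr (poly h \<beta>) = 0} = CHAR('a) ^ m - ?d"
    by (rule card_trace_zeros_attained[OF assms(3)])
  moreover have "int (N_places p m h) = 1 + int p * (int (p ^ m) - int ?d)"
    using h d char by (simp add: N_places_def of_nat_diff)
  ultimately show ?thesis using assms(2) by auto
qed

end
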